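(* Let $p\equiv 2 \pmod 3$ be prime. With $a_t(p) = -\sum_{x \bmod p}\left(\frac{x^3+tx^2+1}{p}\right)$, one has $\sum_{t \bmod p} a_t(p)^2 = p^2-p-1$.
   Context: $\left(\frac{\cdot}{p}\right)$ denotes the Legendre symbol (equal to $0$ at multiples of $p$). *)

theory Defs
  imports "HOL-Number_Theory.Number_Theory"
begin

definition a_coef :: "int \<Rightarrow> int \<Rightarrow> int" where
  "a_coef p t = - (\<Sum>x\<in>{0..<p}. Legendre (x^3 + t * x^2 + 1) p)"

end

theory Submission
  imports Defs
begin

(*
  Expanding the square and summing over t first gives
  sum_t a_t^2 = sum_{x,y} sum_t L(f_t(x) f_t(y)) with f_t(x) = x^2 t + (x^3 + 1), which is
  linear in t.  The inner sum is p for x = y = 0, vanishes when exactly one of x, y is 0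
  (a complete sum of L over a linear form), and otherwise is a Jacobsthal sum of a product
  of two linear forms: p - 1 if they have a common root and -1 if not.  Hence
  sum_t a_t^2 = p + p N - (p - 1)^2, where N counts the pairs of nonzero x, y with
  x^2 (y^3 + 1) = y^2 (x^3 + 1).  This factors as (x - y)(x + y - x^2 y^2) = 0, and counting
  the roots of the quadratic in y by its discriminant 1 + 4 x^3 gives
  N = 2 (p - 1) + sum_{x <> 0} L(1 + 4 x^3) - #{x | x^3 = 2}.  For p = 2 (mod 3) cubing
  permutes the nonzero residues, so the character sum is -1 and 2 has exactly one cube root:
  N = 2 p - 4, and the total is p^2 - p - 1.
*)

lemma Legendre_cong: "[a = b] (mod p) \<Longrightarrow> Legendre a p = Legendre b p"
proof -
  assume "[a = b] (mod p)"
  then have "[a = 0] (mod p) \<longleftrightarrow> [b = 0] (mod p)" "QuadRes p a \<longleftrightarrow> QuadRes p b"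
    unfolding QuadRes_def by (meson cong_sym cong_trans)+
  then show ?thesis
    unfolding Legendre_def by simp
qed

lemma Legendre_mod [simp]: "Legendre (a mod p) p = Legendre a p"
  by (rule Legendre_cong) (simp add: cong_def)

lemma Legendre_values: "Legendre a p \<in> {-1, 0, 1}"
  unfolding Legendre_def by auto

lemma Legendre_eq_0_iff: "Legendre a p = 0 \<longleftrightarrow> p dvd a"
  unfolding Legendre_def by (auto simp: cong_0_iff)

lemma Legendre_0 [simp]: "Legendre 0 p = 0"
  by (simp add: Legendre_eq_0_iff)

lemma bij_betw_affine_mod:
  fixes a b m :: int
  assumes "coprime a m" and "m > 0"
  shows "bij_betw (\<lambda>x. (a * x + b) mod m) {0..<m} {0..<m}"
proof -
  have "inj_on (\<lambda>x. (a * x + b) mod m) {0..<m}"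
  proof (rule inj_onI)
    fix x y
    assume "x \<in> {0..<m}" "y \<in> {0..<m}" and "(a * x + b) mod m = (a * y + b) mod m"
    then have "[a * x = a * y] (mod m)"
      by (simp add: cong_def[symmetric] cong_add_rcancel)
    then have "[x = y] (mod m)"
      using assms(1) cong_mult_lcancel by blast
    then show "x = y"
      using \<open>x \<in> {0..<m}\<close> \<open>y \<in> {0..<m}\<close> cong_less_imp_eq_int by auto
  qed
  moreover have "(\<lambda>x. (a * x + b) mod m) ` {0..<m} \<subseteq> {0..<m}"
    using assms(2) by auto
  ultimately show ?thesis
    unfolding bij_betw_def by (simp add: endo_inj_surj)
qed

lemma cong_affine_factor:
  fixes \<alpha> \<alpha>' a t m :: int
  assumes "[\<alpha> * \<alpha>' = 1] (mod m)"
  shows "[\<alpha> * t + a = \<alpha> * (t + \<alpha>' * a)] (mod m)"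
proof -
  have "[\<alpha> * t + 1 * a = \<alpha> * t + (\<alpha> * \<alpha>') * a] (mod m)"
    using assms by (intro cong_add cong_mult cong_refl) (rule cong_sym)
  then show ?thesis
    by (simp add: algebra_simps)
qed

lemma card_Collect_bij_betw:
  assumes "bij_betw f A B"
  shows "card {x \<in> A. P (f x)} = card {y \<in> B. P y}"
proof (rule bij_betw_same_card, rule bij_betw_subset[OF assms])
  show "f ` {x \<in> A. P (f x)} = {y \<in> B. P y}"
    using assms by (auto simp: bij_betw_def)
qed auto

locale odd_prime =
  fixes p :: int
  assumes prime: "prime p" and gt_2: "p > 2"
begin

lemma not_dvd_of_range: "t \<in> {1..<p} \<Longrightarrow> \<not> p dvd t"
  by (auto simp: zdvd_not_zless)

lemma not_dvd_2: "\<not> p dvd 2"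
  using gt_2 by (simp add: zdvd_not_zless)

lemma not_dvd_4: "\<not> p dvd 4"
  using not_dvd_2 prime prime_dvd_mult_iff[of p 2 2] by simp

lemma coprime_of_not_dvd: "\<not> p dvd a \<Longrightarrow> coprime a p"
  using prime prime_imp_coprime coprime_commute by blast

lemma mod_in_nonzero_residues: "\<not> p dvd a \<Longrightarrow> a mod p \<in> {1..<p}"
proof -
  assume "\<not> p dvd a"
  then have "a mod p \<noteq> 0"
    by (simp add: dvd_eq_mod_eq_0)
  moreover have "0 \<le> a mod p" "a mod p < p"
    using gt_2 by simp_all
  ultimately show ?thesis
    by simp
qed

lemma residues_insert_0: "{0..<p} = insert 0 {1..<p}"
  using gt_2 by auto

lemma Legendre_square: "\<not> p dvd a \<Longrightarrow> Legendre (a\<^sup>2) p = 1"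
proof -
  assume "\<not> p dvd a"
  then have "\<not> [a\<^sup>2 = 0] (mod p)"
    using prime by (simp add: cong_0_iff prime_dvd_power_iff)
  moreover have "QuadRes p (a\<^sup>2)"
    unfolding QuadRes_def by (blast intro: cong_refl)
  ultimately show ?thesis
    unfolding Legendre_def by simp
qed

lemma Legendre_one [simp]: "Legendre 1 p = 1"
  using Legendre_square[of 1] gt_2 by (simp add: zdvd_not_zless)

lemma Legendre_cong_power: "[Legendre a p = a ^ nat ((p - 1) div 2)] (mod p)"
proof -
  have "[Legendre a (int (nat p)) = a ^ ((nat p - 1) div 2)] (mod int (nat p))"
    using euler_criterion[of "nat p" a] prime gt_2 by simp
  moreover have "(nat p - 1) div 2 = nat ((p - 1) div 2)"
    using gt_2 by (simp add: nat_div_distrib nat_diff_distrib)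
  ultimately show ?thesis
    using gt_2 by simp
qed

lemma Legendre_mult: "Legendre (a * b) p = Legendre a p * Legendre b p"
proof -
  define h where "h = nat ((p - 1) div 2)"
  have "[Legendre (a * b) p = (a * b) ^ h] (mod p)"
    unfolding h_def by (rule Legendre_cong_power)
  also have "(a * b) ^ h = a ^ h * b ^ h"
    by (rule power_mult_distrib)
  also have "[\<dots> = Legendre a p * Legendre b p] (mod p)"
    unfolding h_def by (intro cong_mult cong_sym[OF Legendre_cong_power])
  \<comment> \<open>both sides lie in \<open>{-1, 0, 1}\<close> and \<open>p > 2\<close>\<close>
  finally have "[Legendre (a * b) p + 1 = Legendre a p * Legendre b p + 1] (mod p)"
    by (simp add: cong_add)
  moreover have "Legendre (a * b) p + 1 \<in> {0..<p}" "Legendre a p * Legendre b p + 1 \<in> {0..<p}"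
    using Legendre_values[of "a * b" p] Legendre_values[of a p] Legendre_values[of b p] gt_2
    by auto
  ultimately show ?thesis
    using cong_less_imp_eq_int by fastforce
qed

lemma power_p_minus_1_cong: "\<not> p dvd a \<Longrightarrow> [a ^ nat (p - 1) = 1] (mod p)"
proof -
  assume "\<not> p dvd a"
  have "odd p"
    using prime gt_2 prime_odd_int by blast
  then have "nat (p - 1) = 2 * nat ((p - 1) div 2)"
    by (auto elim: oddE)
  then have "a ^ nat (p - 1) = (a ^ nat ((p - 1) div 2))\<^sup>2"
    by (simp add: power_mult[symmetric] mult.commute)
  also have "[\<dots> = (Legendre a p)\<^sup>2] (mod p)"
    using Legendre_cong_power by (simp add: cong_pow cong_sym)
  also have "(Legendre a p)\<^sup>2 = 1"
    using Legendre_values[of a p] Legendre_eq_0_iff[of a p] \<open>\<not> p dvd a\<close> by auto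
  finally show ?thesis .
qed

lemma sum_residues_affine:
  assumes "\<not> p dvd a"
  shows "(\<Sum>x\<in>{0..<p}. g ((a * x + b) mod p)) = (\<Sum>x\<in>{0..<p}. g x)"
  using gt_2 assms
  by (intro sum.reindex_bij_betw bij_betw_affine_mod coprime_of_not_dvd) simp_all

lemma exists_nonresidue: "\<exists>n. Legendre n p = -1"
proof -
  define sq where "sq x = x\<^sup>2 mod p" for x
  have "sq 1 = sq (p - 1)"
    unfolding sq_def by (simp add: power2_eq_square algebra_simps mod_eq_dvd_iff)
  moreover have "1 \<in> {1..<p}" "p - 1 \<in> {1..<p}" "1 \<noteq> p - 1"
    using gt_2 by auto
  ultimately have "\<not> inj_on sq {1..<p}"
    unfolding inj_on_def by blast
  then have "\<not> {1..<p} \<subseteq> sq ` {1..<p}"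
    using finite_surj_inj by blast
  then obtain y where y: "y \<in> {1..<p}" "y \<notin> sq ` {1..<p}"
    by blast
  have "\<not> QuadRes p y"
  proof
    assume "QuadRes p y"
    then obtain z where z: "[z\<^sup>2 = y] (mod p)"
      unfolding QuadRes_def by blast
    then have "sq (z mod p) = y"
      using y(1) by (simp add: sq_def cong_def power_mod)
    moreover have "\<not> p dvd z"
      using z not_dvd_of_range[OF y(1)] by (auto simp: cong_def power_mod power2_eq_square)
    then have "z mod p \<in> {1..<p}"
      by (rule mod_in_nonzero_residues)
    ultimately show False
      using y(2) by blast
  qed
  then show ?thesis
    using not_dvd_of_range[OF y(1)] unfolding Legendre_def by (auto simp: cong_0_iff)
qed

lemma sum_Legendre: "(\<Sum>x\<in>{0..<p}. Legendre x p) = 0"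
proof -
  obtain n where n: "Legendre n p = -1"
    using exists_nonresidue by blast
  then have "\<not> p dvd n"
    using Legendre_eq_0_iff[of n p] by simp
  have "(\<Sum>x\<in>{0..<p}. Legendre x p) = (\<Sum>x\<in>{0..<p}. Legendre ((n * x + 0) mod p) p)"
    by (rule sum_residues_affine[symmetric]) fact
  also have "\<dots> = - (\<Sum>x\<in>{0..<p}. Legendre x p)"
    by (simp add: Legendre_mult n sum_negf)
  finally show ?thesis
    by simp
qed

lemma sum_Legendre_affine: "\<not> p dvd a \<Longrightarrow> (\<Sum>x\<in>{0..<p}. Legendre (a * x + b) p) = 0"
  using sum_residues_affine[of a "\<lambda>x. Legendre x p" b] sum_Legendre by simp

lemma bij_betw_modular_inverse: "bij_betw (modular_inverse p) {1..<p} {1..<p}"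
proof -
  have "modular_inverse p ` {1..<p} \<subseteq> {1..<p}"
    using gt_2 not_dvd_of_range coprime_of_not_dvd
    by (auto simp: mult_modular_inverse_int_pos modular_inverse_int_less int_one_le_iff_zero_less)
  moreover have "inj_on (modular_inverse p) {1..<p}"
  proof (rule inj_on_inverseI)
    fix t
    assume "t \<in> {1..<p}"
    then show "modular_inverse p (modular_inverse p t) = t"
      using not_dvd_of_range coprime_of_not_dvd
      by (intro modular_inverse_int_eqI cong_modular_inverse2 coprime_modular_inverse) auto
  qed
  ultimately show ?thesis
    unfolding bij_betw_def by (simp add: endo_inj_surj)
qed

lemma sum_Legendre_mult_add:
  "(\<Sum>t\<in>{0..<p}. Legendre (t * (t + c)) p) = (if p dvd c then p - 1 else -1)"
proof -
  have "(\<Sum>t\<in>{0..<p}. Legendre (t * (t + c)) p) = (\<Sum>t\<in>{1..<p}. Legendre (t * (t + c)) p)"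
    by (simp add: residues_insert_0)
  also have "\<dots> = (\<Sum>t\<in>{1..<p}. Legendre (c * modular_inverse p t + 1) p)"
  proof (rule sum.cong[OF refl])
    fix t
    assume t: "t \<in> {1..<p}"
    define t' where "t' = modular_inverse p t"
    have "t\<^sup>2 * (c * t' + 1) = c * t * (t * t') + t * t"
      by (simp add: algebra_simps power2_eq_square)
    also have "[\<dots> = c * t * 1 + t * t] (mod p)"
      unfolding t'_def using t not_dvd_of_range coprime_of_not_dvd
      by (intro cong_add cong_mult cong_refl cong_modular_inverse1) auto
    finally have "[t\<^sup>2 * (c * t' + 1) = t * (t + c)] (mod p)"
      by (simp add: algebra_simps)
    then have "Legendre (t * (t + c)) p = Legendre (t\<^sup>2) p * Legendre (c * t' + 1) p"
      by (subst Legendre_mult[symmetric]) (rule Legendre_cong[OF cong_sym])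
    then show "Legendre (t * (t + c)) p = Legendre (c * t' + 1) p"
      using t by (simp add: Legendre_square not_dvd_of_range)
  qed
  also have "\<dots> = (\<Sum>s\<in>{1..<p}. Legendre (c * s + 1) p)"
    by (rule sum.reindex_bij_betw[OF bij_betw_modular_inverse])
  also have "\<dots> = (if p dvd c then p - 1 else -1)"
  proof (cases "p dvd c")
    case True
    then have "Legendre (c * s + 1) p = 1" for s
      using Legendre_cong[of "c * s + 1" 1 p] by (simp add: cong_iff_dvd_diff)
    then show ?thesis
      using True gt_2 by simp
  next
    case False
    have "0 = (\<Sum>s\<in>{0..<p}. Legendre (c * s + 1) p)"
      using sum_Legendre_affine[OF False] by simp
    also have "\<dots> = 1 + (\<Sum>s\<in>{1..<p}. Legendre (c * s + 1) p)"
      by (simp add: residues_insert_0)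
    finally show ?thesis
      using False by simp
  qed
  finally show ?thesis .
qed

lemma sum_Legendre_shifted_product:
  "(\<Sum>t\<in>{0..<p}. Legendre ((t + a) * (t + b)) p) = (if p dvd (a - b) then p - 1 else -1)"
proof -
  define g where "g s = Legendre (s * (s + (a - b))) p" for s
  have g_mod: "g (s mod p) = g s" for s
    unfolding g_def by (rule Legendre_cong) (intro cong_mult cong_add cong_refl; simp add: cong_def)
  have "(\<Sum>t\<in>{0..<p}. Legendre ((t + a) * (t + b)) p) = (\<Sum>t\<in>{0..<p}. g ((1 * t + b) mod p))"
  proof (rule sum.cong[OF refl])
    fix t
    have "g ((1 * t + b) mod p) = g (t + b)"
      by (simp add: g_mod)
    then show "Legendre ((t + a) * (t + b)) p = g ((1 * t + b) mod p)"
      by (simp add: g_def algebra_simps)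
  qed
  also have "\<dots> = (\<Sum>s\<in>{0..<p}. g s)"
    using gt_2 by (intro sum_residues_affine) (simp add: zdvd_not_zless)
  finally show ?thesis
    by (simp add: g_def sum_Legendre_mult_add)
qed

lemma sum_Legendre_linear_product:
  assumes "\<not> p dvd \<alpha>" and "\<not> p dvd \<beta>"
  shows "(\<Sum>t\<in>{0..<p}. Legendre ((\<alpha> * t + a) * (\<beta> * t + b)) p)
       = Legendre (\<alpha> * \<beta>) p * (if [\<alpha> * b = \<beta> * a] (mod p) then p - 1 else -1)"
proof -
  define \<alpha>' where "\<alpha>' = modular_inverse p \<alpha>"
  define \<beta>' where "\<beta>' = modular_inverse p \<beta>"
  have \<alpha>': "[\<alpha> * \<alpha>' = 1] (mod p)" and \<beta>': "[\<beta> * \<beta>' = 1] (mod p)"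
    unfolding \<alpha>'_def \<beta>'_def using assms by (simp_all add: cong_modular_inverse1 coprime_of_not_dvd)
  have "Legendre ((\<alpha> * t + a) * (\<beta> * t + b)) p
      = Legendre (\<alpha> * \<beta>) p * Legendre ((t + \<alpha>' * a) * (t + \<beta>' * b)) p" for t
  proof -
    have "[(\<alpha> * t + a) * (\<beta> * t + b) = (\<alpha> * \<beta>) * ((t + \<alpha>' * a) * (t + \<beta>' * b))] (mod p)"
      using cong_mult[OF cong_affine_factor[OF \<alpha>', where t = t and a = a] cong_affine_factor[OF \<beta>', where t = t and a = b]] by (simp add: ac_simps)
    then show ?thesis
      by (subst Legendre_mult[symmetric]) (rule Legendre_cong)
  qed
  then have "(\<Sum>t\<in>{0..<p}. Legendre ((\<alpha> * t + a) * (\<beta> * t + b)) p)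
      = Legendre (\<alpha> * \<beta>) p * (if p dvd (\<alpha>' * a - \<beta>' * b) then p - 1 else -1)"
    by (simp add: sum_distrib_left[symmetric] sum_Legendre_shifted_product)
  also have "p dvd (\<alpha>' * a - \<beta>' * b) \<longleftrightarrow> [\<alpha> * b = \<beta> * a] (mod p)"
  proof -
    have "\<alpha> * \<beta> * (\<alpha>' * a - \<beta>' * b) = \<beta> * a * (\<alpha> * \<alpha>') - \<alpha> * b * (\<beta> * \<beta>')"
      by (simp add: algebra_simps)
    also have "[\<dots> = \<beta> * a * 1 - \<alpha> * b * 1] (mod p)"
      using \<alpha>' \<beta>' by (intro cong_diff cong_mult cong_refl)
    finally have "p dvd \<alpha> * \<beta> * (\<alpha>' * a - \<beta>' * b) \<longleftrightarrow> p dvd \<beta> * a - \<alpha> * b"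
      by (simp add: cong_dvd_iff)
    then show ?thesis
      using assms prime by (simp add: prime_dvd_mult_iff cong_iff_dvd_diff dvd_diff_commute)
  qed
  finally show ?thesis .
qed

lemma cong_square_iff: "[x\<^sup>2 = y\<^sup>2] (mod p) \<longleftrightarrow> [x = y] (mod p) \<or> [x = - y] (mod p)"
proof -
  have "x\<^sup>2 - y\<^sup>2 = (x - y) * (x - - y)"
    by (simp add: power2_eq_square algebra_simps)
  then show ?thesis
    using prime by (simp add: cong_iff_dvd_diff prime_dvd_mult_iff)
qed

lemma card_square_roots: "int (card {z \<in> {0..<p}. [z\<^sup>2 = d] (mod p)}) = 1 + Legendre d p"
proof (cases "QuadRes p d")
  case False
  then have no_roots: "{z \<in> {0..<p}. [z\<^sup>2 = d] (mod p)} = {}"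
    unfolding QuadRes_def by blast
  have "\<not> [d = 0] (mod p)"
    using False cong_sym[of d 0 p] unfolding QuadRes_def by (metis zero_power2)
  with False show ?thesis
    unfolding no_roots by (simp add: Legendre_def)
next
  case True
  then obtain y where y: "[y\<^sup>2 = d] (mod p)"
    unfolding QuadRes_def by blast
  have "z \<in> {0..<p} \<and> [z\<^sup>2 = d] (mod p) \<longleftrightarrow> z = y mod p \<or> z = (- y) mod p" for z
  proof -
    have "[z\<^sup>2 = d] (mod p) \<longleftrightarrow> [z = y] (mod p) \<or> [z = - y] (mod p)"
      using y cong_square_iff[of z y] by (meson cong_sym cong_trans)
    then show ?thesis
      using gt_2 by (auto simp: cong_def)
  qed
  then have roots: "{z \<in> {0..<p}. [z\<^sup>2 = d] (mod p)} = {y mod p, (- y) mod p}"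
    by blast
  show ?thesis
  proof (cases "p dvd d")
    case True
    then have "p dvd y"
      using cong_dvd_iff[OF y] prime by (simp add: prime_dvd_power_iff)
    with True show ?thesis
      unfolding roots by (simp add: Legendre_eq_0_iff)
  next
    case False
    have "y mod p \<noteq> (- y) mod p"
    proof
      assume "y mod p = (- y) mod p"
      then have "p dvd 2 * y"
        by (simp add: mod_eq_dvd_iff)
      then have "p dvd y\<^sup>2"
        using prime not_dvd_2 by (simp add: prime_dvd_mult_iff power2_eq_square)
      then show False
        using cong_dvd_iff[OF y] False by simp
    qed
    with True False show ?thesis
      unfolding roots by (simp add: Legendre_def cong_0_iff)
  qed
qed

lemma card_quadratic_roots:
  assumes "\<not> p dvd a"
  shows "int (card {y \<in> {0..<p}. [a * y\<^sup>2 + b * y + c = 0] (mod p)}) = 1 + Legendre (b\<^sup>2 - 4 * a * c) p"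
proof -
  define d where "d = b\<^sup>2 - 4 * a * c"
  define \<phi> where "\<phi> y = (2 * a * y + b) mod p" for y
  have "\<not> p dvd 2 * a" "\<not> p dvd 4 * a"
    using assms not_dvd_2 not_dvd_4 prime by (simp_all add: prime_dvd_mult_iff)
  then have \<phi>: "bij_betw \<phi> {0..<p} {0..<p}"
    unfolding \<phi>_def using gt_2 by (intro bij_betw_affine_mod coprime_of_not_dvd) simp_all
  have "[a * y\<^sup>2 + b * y + c = 0] (mod p) \<longleftrightarrow> [(\<phi> y)\<^sup>2 = d] (mod p)" for y
  proof -
    have "(2 * a * y + b)\<^sup>2 - d = (4 * a) * (a * y\<^sup>2 + b * y + c)"
      unfolding d_def by (simp add: power2_eq_square algebra_simps)
    then have "[(2 * a * y + b)\<^sup>2 = d] (mod p) \<longleftrightarrow> p dvd a * y\<^sup>2 + b * y + c"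
      using \<open>\<not> p dvd 4 * a\<close> prime by (simp add: cong_iff_dvd_diff prime_dvd_mult_iff)
    then show ?thesis
      unfolding \<phi>_def cong_0_iff by (simp add: cong_def power_mod)
  qed
  then have "card {y \<in> {0..<p}. [a * y\<^sup>2 + b * y + c = 0] (mod p)} = card {z \<in> {0..<p}. [z\<^sup>2 = d] (mod p)}"
    using card_Collect_bij_betw[OF \<phi>, of "\<lambda>z. [z\<^sup>2 = d] (mod p)"] by simp
  then show ?thesis
    using card_square_roots d_def by simp
qed

lemma power_2p_minus_1_cong: "[x ^ (2 * nat (p - 1) + 1) = x] (mod p)"
proof (cases "p dvd x")
  case True
  then show ?thesis
    by (simp add: cong_iff_dvd_diff)
next
  case False
  have "x ^ (2 * nat (p - 1) + 1) = (x ^ nat (p - 1))\<^sup>2 * x"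
    by (simp add: power_add power_mult[symmetric] mult.commute)
  also have "[\<dots> = 1\<^sup>2 * x] (mod p)"
    using False by (intro cong_mult cong_pow power_p_minus_1_cong cong_refl)
  finally show ?thesis
    by simp
qed

(* For nonzero x and y: x and y are roots of the same polynomial X^3 + t X^2 + 1,
   namely for t = -(x^3 + 1) / x^2. *)
definition same_root :: "int \<Rightarrow> int \<Rightarrow> bool" where
  "same_root x y \<longleftrightarrow> [x\<^sup>2 * (y ^ 3 + 1) = y\<^sup>2 * (x ^ 3 + 1)] (mod p)"

lemma same_root_iff:
  assumes "x \<in> {0..<p}" and "y \<in> {0..<p}"
  shows "same_root x y \<longleftrightarrow> x = y \<or> [x\<^sup>2 * y\<^sup>2 = x + y] (mod p)"
proof -
  have "x\<^sup>2 * (y ^ 3 + 1) - y\<^sup>2 * (x ^ 3 + 1) = (x - y) * (x + y - x\<^sup>2 * y\<^sup>2)"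
    by (simp add: power2_eq_square power3_eq_cube algebra_simps)
  then have "same_root x y \<longleftrightarrow> [x = y] (mod p) \<or> [x\<^sup>2 * y\<^sup>2 = x + y] (mod p)"
    using prime unfolding same_root_def by (simp add: cong_iff_dvd_diff prime_dvd_mult_iff dvd_diff_commute)
  then show ?thesis
    using assms cong_less_imp_eq_int[of x p y] by auto
qed

lemma card_same_root:
  assumes x: "x \<in> {1..<p}"
  shows "int (card {y \<in> {1..<p}. same_root x y})
       = 2 + Legendre (4 * x ^ 3 + 1) p - of_bool ([x ^ 3 = 2] (mod p))"
proof -
  define Q where "Q = {y \<in> {1..<p}. [x\<^sup>2 * y\<^sup>2 = x + y] (mod p)}"
  have row: "{y \<in> {1..<p}. same_root x y} = insert x Q"
    using x same_root_iff[of x] unfolding Q_def by auto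
  have "[x\<^sup>2 * y\<^sup>2 + (-1) * y + (- x) = 0] (mod p) \<longleftrightarrow> [x\<^sup>2 * y\<^sup>2 = x + y] (mod p)" for y
    by (simp add: cong_iff_dvd_diff algebra_simps)
  moreover have "\<not> [x\<^sup>2 * 0\<^sup>2 = x + 0] (mod p)"
    using not_dvd_of_range[OF x] by (simp add: cong_iff_dvd_diff)
  ultimately have "Q = {y \<in> {0..<p}. [x\<^sup>2 * y\<^sup>2 + (-1) * y + (- x) = 0] (mod p)}"
    unfolding Q_def residues_insert_0 by auto
  moreover have "\<not> p dvd x\<^sup>2"
    using not_dvd_of_range[OF x] prime by (simp add: prime_dvd_power_iff)
  ultimately have "int (card Q) = 1 + Legendre ((-1)\<^sup>2 - 4 * x\<^sup>2 * (- x)) p"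
    by (simp only: card_quadratic_roots not_False_eq_True)
  also have "(-1)\<^sup>2 - 4 * x\<^sup>2 * (- x) = 4 * x ^ 3 + 1"
    by (simp add: power2_eq_square power3_eq_cube)
  finally have "int (card Q) = 1 + Legendre (4 * x ^ 3 + 1) p" .
  moreover have "x \<in> Q \<longleftrightarrow> [x ^ 3 = 2] (mod p)"
  proof -
    have "x\<^sup>2 * x\<^sup>2 - (x + x) = x * (x ^ 3 - 2)"
      by (simp add: power2_eq_square power3_eq_cube algebra_simps)
    then show ?thesis
      using x not_dvd_of_range[OF x] prime unfolding Q_def by (simp add: cong_iff_dvd_diff prime_dvd_mult_iff)
  qed
  moreover have "finite Q"
    unfolding Q_def by (rule finite_subset[of _ "{1..<p}"]) auto
  ultimately show ?thesis
    unfolding row by (simp add: card_insert_if)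
qed

lemma a_coef_squared:
  "(a_coef p t)\<^sup>2 = (\<Sum>x\<in>{0..<p}. \<Sum>y\<in>{0..<p}. Legendre ((x ^ 3 + t * x\<^sup>2 + 1) * (y ^ 3 + t * y\<^sup>2 + 1)) p)"
  unfolding a_coef_def power2_eq_square[of "- _"] by (simp add: sum_product Legendre_mult)

lemma sum_Legendre_cubic_family:
  assumes "y \<in> {1..<p}"
  shows "(\<Sum>t\<in>{0..<p}. Legendre (y ^ 3 + t * y\<^sup>2 + 1) p) = 0"
proof -
  have "\<not> p dvd y\<^sup>2"
    using assms not_dvd_of_range prime by (simp add: prime_dvd_power_iff)
  then show ?thesis
    using sum_Legendre_affine[of "y\<^sup>2" "y ^ 3 + 1"] by (simp add: algebra_simps)
qed

lemma sum_Legendre_cubic_family_pair: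
  assumes "x \<in> {1..<p}" and "y \<in> {1..<p}"
  shows "(\<Sum>t\<in>{0..<p}. Legendre ((x ^ 3 + t * x\<^sup>2 + 1) * (y ^ 3 + t * y\<^sup>2 + 1)) p)
       = p * of_bool (same_root x y) - 1"
proof -
  have "\<not> p dvd x\<^sup>2" "\<not> p dvd y\<^sup>2" "\<not> p dvd x * y"
    using assms not_dvd_of_range prime by (simp_all add: prime_dvd_power_iff prime_dvd_mult_iff)
  have "(\<Sum>t\<in>{0..<p}. Legendre ((x ^ 3 + t * x\<^sup>2 + 1) * (y ^ 3 + t * y\<^sup>2 + 1)) p)
      = (\<Sum>t\<in>{0..<p}. Legendre ((x\<^sup>2 * t + (x ^ 3 + 1)) * (y\<^sup>2 * t + (y ^ 3 + 1))) p)"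
    by (simp add: algebra_simps)
  also have "\<dots> = Legendre (x\<^sup>2 * y\<^sup>2) p * (if same_root x y then p - 1 else -1)"
    unfolding same_root_def by (rule sum_Legendre_linear_product) fact+
  also have "Legendre (x\<^sup>2 * y\<^sup>2) p = 1"
    using Legendre_square[OF \<open>\<not> p dvd x * y\<close>] by (simp add: power_mult_distrib)
  finally show ?thesis
    by simp
qed

context
  assumes two_mod_3: "[p = 2] (mod 3)"
begin

lemma cube_cong_imp_cong:
  assumes "[x ^ 3 = y ^ 3] (mod p)"
  shows "[x = y] (mod p)"
proof -
  define e where "e = nat ((2 * p - 1) div 3)"
  obtain k where k: "p = 3 * k + 2"
    using two_mod_3 by (auto simp: cong_iff_dvd_diff algebra_simps elim!: dvdE)
  then have "(2 * p - 1) div 3 = 2 * k + 1"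
    by simp
  then have "3 * e = 2 * nat (p - 1) + 1"
    unfolding e_def using k gt_2 by (simp add: nat_mult_distrib nat_add_distrib)
  then have "(z ^ 3) ^ e = z ^ (2 * nat (p - 1) + 1)" for z :: int
    by (simp flip: power_mult)
  then have "[x ^ (2 * nat (p - 1) + 1) = y ^ (2 * nat (p - 1) + 1)] (mod p)"
    using cong_pow[OF assms, of e] by simp
  then show ?thesis
    using power_2p_minus_1_cong by (meson cong_sym cong_trans)
qed

lemma bij_betw_cube: "bij_betw (\<lambda>x. x ^ 3 mod p) {1..<p} {1..<p}"
proof -
  have "inj_on (\<lambda>x. x ^ 3 mod p) {1..<p}"
  proof (rule inj_onI)
    fix x y
    assume "x \<in> {1..<p}" "y \<in> {1..<p}" and "x ^ 3 mod p = y ^ 3 mod p"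
    then have "[x = y] (mod p)"
      by (intro cube_cong_imp_cong[of x y]) (simp add: cong_def)
    with \<open>x \<in> {1..<p}\<close> \<open>y \<in> {1..<p}\<close> show "x = y"
      using cong_less_imp_eq_int[of x p y] by simp
  qed
  moreover have "(\<lambda>x. x ^ 3 mod p) ` {1..<p} \<subseteq> {1..<p}"
    using not_dvd_of_range prime by (auto intro!: mod_in_nonzero_residues simp: prime_dvd_power_iff)
  ultimately show ?thesis
    unfolding bij_betw_def by (simp add: endo_inj_surj)
qed

lemma sum_Legendre_cube: "(\<Sum>x\<in>{1..<p}. Legendre (4 * x ^ 3 + 1) p) = -1"
proof -
  have "(\<Sum>x\<in>{1..<p}. Legendre (4 * x ^ 3 + 1) p) = (\<Sum>x\<in>{1..<p}. Legendre (4 * (x ^ 3 mod p) + 1) p)"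
    by (intro sum.cong refl Legendre_cong cong_add cong_mult) (simp_all add: cong_def)
  also have "\<dots> = (\<Sum>w\<in>{1..<p}. Legendre (4 * w + 1) p)"
    by (rule sum.reindex_bij_betw[OF bij_betw_cube])
  also have "\<dots> = (\<Sum>w\<in>{0..<p}. Legendre (4 * w + 1) p) - 1"
    by (simp add: residues_insert_0)
  also have "(\<Sum>w\<in>{0..<p}. Legendre (4 * w + 1) p) = 0"
    by (rule sum_Legendre_affine[OF not_dvd_4])
  finally show ?thesis
    by simp
qed

lemma card_cube_roots_2: "card {x \<in> {1..<p}. [x ^ 3 = 2] (mod p)} = 1"
proof -
  have "card {x \<in> {1..<p}. [x ^ 3 = 2] (mod p)} = card {x \<in> {1..<p}. x ^ 3 mod p = 2}"
    using gt_2 by (simp add: cong_def)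
  also have "\<dots> = card {w \<in> {1..<p}. w = 2}"
    by (rule card_Collect_bij_betw[OF bij_betw_cube])
  also have "{w \<in> {1..<p}. w = 2} = {2}"
    using gt_2 by auto
  finally show ?thesis
    by simp
qed

lemma sum_card_same_root:
  "(\<Sum>x\<in>{1..<p}. int (card {y \<in> {1..<p}. same_root x y})) = 2 * p - 4"
proof -
  have "(\<Sum>x\<in>{1..<p}. int (card {y \<in> {1..<p}. same_root x y}))
      = (\<Sum>x\<in>{1..<p}. 2 + Legendre (4 * x ^ 3 + 1) p - of_bool ([x ^ 3 = 2] (mod p)))"
    by (rule sum.cong[OF refl]) (rule card_same_root)
  also have "\<dots> = 2 * (p - 1) + (\<Sum>x\<in>{1..<p}. Legendre (4 * x ^ 3 + 1) p)
      - (\<Sum>x\<in>{1..<p}. of_bool ([x ^ 3 = 2] (mod p)))"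
    using gt_2 by (simp add: sum.distrib sum_subtractf)
  also have "(\<Sum>x\<in>{1..<p}. of_bool ([x ^ 3 = 2] (mod p))) = int (card {x \<in> {1..<p}. [x ^ 3 = 2] (mod p)})"
    by (simp add: Int_def)
  finally show ?thesis
    using sum_Legendre_cube card_cube_roots_2 by simp
qed

lemma sum_a_coef_squared: "(\<Sum>t\<in>{0..<p}. (a_coef p t)\<^sup>2) = p\<^sup>2 - p - 1"
proof -
  define F where "F x y = (\<Sum>t\<in>{0..<p}. Legendre ((x ^ 3 + t * x\<^sup>2 + 1) * (y ^ 3 + t * y\<^sup>2 + 1)) p)"
    for x y
  define N where "N x = int (card {y \<in> {1..<p}. same_root x y})" for x
  have "(\<Sum>t\<in>{0..<p}. (a_coef p t)\<^sup>2) = (\<Sum>x\<in>{0..<p}. \<Sum>t\<in>{0..<p}. \<Sum>y\<in>{0..<p}.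
      Legendre ((x ^ 3 + t * x\<^sup>2 + 1) * (y ^ 3 + t * y\<^sup>2 + 1)) p)"
    unfolding a_coef_squared by (rule sum.swap)
  also have "\<dots> = (\<Sum>x\<in>{0..<p}. \<Sum>y\<in>{0..<p}. F x y)"
    unfolding F_def by (rule sum.cong[OF refl], rule sum.swap)
  also have "\<dots> = F 0 0 + (\<Sum>y\<in>{1..<p}. F 0 y) + (\<Sum>x\<in>{1..<p}. F x 0 + (\<Sum>y\<in>{1..<p}. F x y))"
    by (simp add: residues_insert_0 sum.distrib)
  also have "F 0 0 = p"
    using gt_2 by (simp add: F_def)
  also have "(\<Sum>y\<in>{1..<p}. F 0 y) = 0"
    by (simp add: F_def sum_Legendre_cubic_family)
  also have "(\<Sum>x\<in>{1..<p}. F x 0 + (\<Sum>y\<in>{1..<p}. F x y)) = (\<Sum>x\<in>{1..<p}. p * N x - (p - 1))"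
    using gt_2 by (intro sum.cong refl)
      (simp add: F_def N_def sum_Legendre_cubic_family sum_Legendre_cubic_family_pair sum_subtractf
        sum_distrib_left[symmetric] Int_def)
  also have "\<dots> = p * (2 * p - 4) - (p - 1)\<^sup>2"
    using gt_2 sum_card_same_root
    by (simp add: N_def sum_subtractf sum_distrib_left[symmetric] power2_eq_square)
  finally show ?thesis
    by (simp add: power2_eq_square algebra_simps)
qed

end

end

theorem mainTheorem3:
  fixes p :: int
  assumes "prime p" and "p > 2" and "[p = 2] (mod 3)"
  shows "(\<Sum>t\<in>{0..<p}. (a_coef p t)^2) = p^2 - p - 1"
proof -
  interpret odd_prime p
    using assms(1,2) by unfold_locales
  show ?thesis
    using sum_a_coef_squared[OF assms(3)] .
qed

end
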